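(* Let $\Phi$ be a root system and $\beta_1,\dots,\beta_r\in\Phi$ pairwise strongly orthogonal roots. Then there is $\omega$ in the dual lattice $(\mathbb Z[\Phi])^*=\{\omega\in V:(\alpha|\omega)\in\mathbb Z\ \forall\alpha\in\Phi\}$ such that $(\beta_i|\omega)=1$ for all $i=1,\dots,r$.
   Context: $\Phi$ is a reduced crystallographic root system spanning a real Euclidean space $V$ whose inner product $(\cdot|\cdot)$ is invariant under the Weyl group (e.g. dual to the Killing form). Distinct roots are strongly orthogonal if they are orthogonal and neither their sum nor difference is a root. *)

theory Defs
  imports "HOL-Analysis.Analysis"
begin

text \<open>Reduced crystallographic root system spanning the Euclidean space 'a,
  with respect to the inner product of 'a (which is then Weyl-invariant).\<close>

definition refl_root :: "'a::euclidean_space \<Rightarrow> 'a \<Rightarrow> 'a" where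
  "refl_root \<alpha> v = v - (2 * (v \<bullet> \<alpha>) / (\<alpha> \<bullet> \<alpha>)) *\<^sub>R \<alpha>"

definition root_system :: "'a::euclidean_space set \<Rightarrow> bool" where
  "root_system \<Phi> \<longleftrightarrow>
     finite \<Phi> \<and> 0 \<notin> \<Phi> \<and> span \<Phi> = UNIV \<and>
     (\<forall>\<alpha>\<in>\<Phi>. \<forall>\<beta>\<in>\<Phi>. refl_root \<alpha> \<beta> \<in> \<Phi>) \<and>
     (\<forall>\<alpha>\<in>\<Phi>. \<forall>\<beta>\<in>\<Phi>. 2 * (\<beta> \<bullet> \<alpha>) / (\<alpha> \<bullet> \<alpha>) \<in> \<int>) \<and>
     (\<forall>\<alpha>\<in>\<Phi>. \<forall>c::real. c *\<^sub>R \<alpha> \<in> \<Phi> \<longrightarrow> c = 1 \<or> c = -1)"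

definition strongly_orthogonal :: "'a::euclidean_space set \<Rightarrow> 'a \<Rightarrow> 'a \<Rightarrow> bool" where
  "strongly_orthogonal \<Phi> \<alpha> \<beta> \<longleftrightarrow>
     \<alpha> \<noteq> \<beta> \<and> \<alpha> \<bullet> \<beta> = 0 \<and> \<alpha> + \<beta> \<notin> \<Phi> \<and> \<alpha> - \<beta> \<notin> \<Phi>"

end

theory Submission
  imports Defs
begin

text \<open>Let \<open>P\<close> be the half of \<open>\<Phi>\<close> that is positive on the orthogonal complement of the span of
  the \<open>\<beta> i\<close> (for an arbitrary choice of signs there) and lexicographically positive in the
  coordinates along \<open>\<beta> 0, \<dots>, \<beta> (r - 1)\<close> on the span, and let \<open>\<rho>\<^sup>\<or>\<close> be half the sum of the
  coroots of \<open>P\<close>. For any half \<open>P\<close> of \<open>\<Phi>\<close> the pairings \<open>\<langle>\<alpha>, \<rho>\<^sup>\<or>\<rangle>\<close> are integers. For our \<open>P\<close>,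
  \<open>\<langle>\<beta> i, \<rho>\<^sup>\<or>\<rangle>\<close> is odd: only roots in the span whose first nonzero coordinate is the \<open>i\<close>-th
  contribute, the reflections in the later \<open>\<beta> j\<close> pair most of them up, and the remaining roots,
  with exactly two nonzero coordinates, are handled by a rank two argument that uses strong
  orthogonality. Since the \<open>\<beta> i\<close> are orthogonal, subtracting suitable integer multiples of their
  coroots from \<open>\<rho>\<^sup>\<or>\<close> then gives \<open>\<omega>\<close>.\<close>

section \<open>Parity of sums under involutions\<close>

lemma even_sum_fixpoint_free_involution:
  fixes f :: "'b \<Rightarrow> int"
  assumes "finite A" "\<And>x. x \<in> A \<Longrightarrow> \<tau> x \<in> A" "\<And>x. x \<in> A \<Longrightarrow> \<tau> (\<tau> x) = x"
    "\<And>x. x \<in> A \<Longrightarrow> f (\<tau> x) = f x" "\<And>x. x \<in> A \<Longrightarrow> \<tau> x \<noteq> x"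
  shows "even (sum f A)"
  using assms
proof (induction "card A" arbitrary: A rule: less_induct)
  case less
  show ?case
  proof (cases "A = {}")
    case False
    then obtain x where x: "x \<in> A" by auto
    let ?B = "A - {x, \<tau> x}"
    have tx: "\<tau> x \<in> A" "\<tau> x \<noteq> x" using less.prems x by auto
    have "even (sum f ?B)"
    proof (rule less.hyps)
      show "card ?B < card A"
        using less.prems(1) x by (intro psubset_card_mono) auto
      fix y assume y: "y \<in> ?B"
      then have "\<tau> y \<noteq> x" "\<tau> y \<noteq> \<tau> x"
        using less.prems(3) x by (metis DiffE insertCI)+
      then show "\<tau> y \<in> ?B" using y less.prems(2) by blast
      show "\<tau> (\<tau> y) = y" "f (\<tau> y) = f y" "\<tau> y \<noteq> y" using y less.prems(3-5) by auto
    qed (use less.prems(1) in auto)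
    moreover have "sum f A = sum f ?B + sum f {x, \<tau> x}"
      using less.prems(1) x tx by (intro sum.subset_diff) auto
    moreover have "sum f {x, \<tau> x} = 2 * f x" using tx less.prems(4) x by simp
    ultimately show ?thesis by simp
  qed simp
qed

lemma even_sum_diff_fixed_points:
  fixes f :: "'b \<Rightarrow> int"
  assumes "finite A" "\<And>x. x \<in> A \<Longrightarrow> \<tau> x \<in> A" "\<And>x. x \<in> A \<Longrightarrow> \<tau> (\<tau> x) = x"
    "\<And>x. x \<in> A \<Longrightarrow> f (\<tau> x) = f x"
  shows "even (sum f A - sum f {x\<in>A. \<tau> x = x})"
proof -
  let ?N = "{x\<in>A. \<tau> x \<noteq> x}"
  have "even (sum f ?N)"
    by (rule even_sum_fixpoint_free_involution[where \<tau> = \<tau>]) (use assms in force)+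
  moreover have "sum f A = sum f ?N + sum f {x\<in>A. \<tau> x = x}"
    using assms(1) by (subst sum.union_disjoint[symmetric]) (auto intro: sum.cong)
  ultimately show ?thesis by simp
qed

lemma even_sum_diff_card_odd:
  fixes f :: "'b \<Rightarrow> int"
  assumes "finite A"
  shows "even (sum f A - int (card {x\<in>A. odd (f x)}))"
  using assms
proof (induction A rule: finite_induct)
  case (insert a A)
  show ?case
  proof (cases "odd (f a)")
    case True
    then have "card {x\<in>insert a A. odd (f x)} = Suc (card {x\<in>A. odd (f x)})"
      using insert by (simp add: insert_compr[symmetric] Collect_conj_eq)
    then show ?thesis using insert True by auto
  next
    case False
    then have "{x\<in>insert a A. odd (f x)} = {x\<in>A. odd (f x)}" by auto
    then show ?thesis using insert False by auto
  qed
qed simp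

lemma sum_eq_0_if_involution_negates:
  fixes f :: "'b \<Rightarrow> 'c::linordered_idom"
  assumes "finite A" "\<And>x. x \<in> A \<Longrightarrow> \<tau> x \<in> A" "\<And>x. x \<in> A \<Longrightarrow> \<tau> (\<tau> x) = x"
    "\<And>x. x \<in> A \<Longrightarrow> f (\<tau> x) = - f x"
  shows "sum f A = 0"
proof -
  have "bij_betw \<tau> A A"
    by (rule bij_betwI[where g = \<tau>]) (use assms in auto)
  then have "sum f A = sum (f \<circ> \<tau>) A" by (simp add: sum.reindex_bij_betw)
  also have "\<dots> = - sum f A" using assms(4) by (simp add: sum_negf)
  finally show ?thesis by (simp add: equal_neg_zero)
qed

section \<open>Reflections and Cartan integers\<close>

definition cartan :: "'a::euclidean_space \<Rightarrow> 'a \<Rightarrow> real" where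
  "cartan x \<alpha> = 2 * (x \<bullet> \<alpha>) / (\<alpha> \<bullet> \<alpha>)"

definition coroot :: "'a::euclidean_space \<Rightarrow> 'a" where
  "coroot \<alpha> = (2 / (\<alpha> \<bullet> \<alpha>)) *\<^sub>R \<alpha>"

lemma inner_coroot: "x \<bullet> coroot \<alpha> = cartan x \<alpha>"
  unfolding coroot_def cartan_def by simp

lemma cartan_self: "(\<alpha>::'a::euclidean_space) \<noteq> 0 \<Longrightarrow> cartan \<alpha> \<alpha> = 2"
  unfolding cartan_def by simp

lemma cartan_uminus_right: "cartan x (- \<alpha>) = - cartan x \<alpha>"
  unfolding cartan_def by simp

lemma refl_root_eq: "refl_root \<alpha> x = x - cartan x \<alpha> *\<^sub>R \<alpha>"
  unfolding refl_root_def cartan_def by simp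

lemma refl_root_refl_root: "(\<alpha>::'a::euclidean_space) \<noteq> 0 \<Longrightarrow> refl_root \<alpha> (refl_root \<alpha> v) = v"
  unfolding refl_root_def by (simp add: inner_diff_left algebra_simps)

lemma inner_refl_root_refl_root:
  "(\<alpha>::'a::euclidean_space) \<noteq> 0 \<Longrightarrow> refl_root \<alpha> x \<bullet> refl_root \<alpha> y = x \<bullet> y"
  unfolding refl_root_def
  by (simp add: inner_diff_left inner_diff_right algebra_simps power2_eq_square inner_commute)

lemma refl_root_self: "(\<alpha>::'a::euclidean_space) \<noteq> 0 \<Longrightarrow> refl_root \<alpha> \<alpha> = - \<alpha>"
  unfolding refl_root_def by (simp add: algebra_simps scaleR_2)

lemma refl_root_orthogonal: "(v::'a::euclidean_space) \<bullet> \<alpha> = 0 \<Longrightarrow> refl_root \<alpha> v = v"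
  unfolding refl_root_def by simp

lemma refl_root_uminus: "refl_root \<alpha> (- v) = - refl_root \<alpha> (v::'a::euclidean_space)"
  unfolding refl_root_def by (simp add: algebra_simps)

lemma inner_root_refl_root: "(\<alpha>::'a::euclidean_space) \<noteq> 0 \<Longrightarrow> \<alpha> \<bullet> refl_root \<alpha> x = - (\<alpha> \<bullet> x)"
  unfolding refl_root_def by (simp add: inner_diff_right algebra_simps inner_commute)

lemma cartan_refl_root:
  "(\<alpha>::'a::euclidean_space) \<noteq> 0 \<Longrightarrow> cartan \<alpha> (refl_root \<alpha> \<gamma>) = - cartan \<alpha> \<gamma>"
  unfolding cartan_def by (simp add: inner_root_refl_root inner_refl_root_refl_root)

lemma cartan_products_in_orthogonal_plane:
  fixes u v g :: "'a::euclidean_space"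
  assumes "u \<bullet> v = 0" "u \<noteq> 0" "v \<noteq> 0" "g \<noteq> 0" "g = a *\<^sub>R u + b *\<^sub>R v"
  shows "cartan g u * cartan u g + cartan g v * cartan v g = 4"
proof -
  have gu: "g \<bullet> u = a * (u \<bullet> u)" and gv: "g \<bullet> v = b * (v \<bullet> v)"
    using assms(1,5) by (simp_all add: inner_add_left inner_commute[of v u])
  have gg: "g \<bullet> g = a * a * (u \<bullet> u) + b * b * (v \<bullet> v)"
    using assms(1,5) by (simp add: inner_add_left inner_add_right inner_commute algebra_simps)
  have "g \<bullet> g \<noteq> 0" using assms(4) by simp
  then have "cartan g u * cartan u g + cartan g v * cartan v g
      = 4 * (a * a * (u \<bullet> u) + b * b * (v \<bullet> v)) / (g \<bullet> g)"
    using gu gv assms(2,3) unfolding cartan_def by (simp add: inner_commute field_simps)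
  also have "\<dots> = 4" unfolding gg[symmetric] using \<open>g \<bullet> g \<noteq> 0\<close> by simp
  finally show ?thesis .
qed

text \<open>On pairs of roots \<open>cartan\<close> is integral, so the floor below is exact; it only serves
  to make parity arguments available.\<close>

definition cartan_int :: "'a::euclidean_space \<Rightarrow> 'a \<Rightarrow> int" where
  "cartan_int x \<alpha> = \<lfloor>cartan x \<alpha>\<rfloor>"

definition half_sum_coroots :: "'a::euclidean_space set \<Rightarrow> 'a" where
  "half_sum_coroots P = (1/2) *\<^sub>R (\<Sum>\<gamma>\<in>P. coroot \<gamma>)"

lemma inner_half_sum_coroots: "x \<bullet> half_sum_coroots P = (\<Sum>\<gamma>\<in>P. cartan x \<gamma>) / 2"
  unfolding half_sum_coroots_def by (simp add: inner_sum_right inner_coroot)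

section \<open>Halves of a root system\<close>

locale root_sys =
  fixes \<Phi> :: "'a::euclidean_space set"
  assumes root_system: "root_system \<Phi>"
begin

lemma finite_roots: "finite \<Phi>"
  using root_system unfolding root_system_def by auto

lemma root_nonzero: "\<alpha> \<in> \<Phi> \<Longrightarrow> \<alpha> \<noteq> 0"
  using root_system unfolding root_system_def by auto

lemma inner_root_pos: "\<alpha> \<in> \<Phi> \<Longrightarrow> 0 < \<alpha> \<bullet> \<alpha>"
  using root_nonzero by auto

lemma refl_root_root: "\<alpha> \<in> \<Phi> \<Longrightarrow> \<gamma> \<in> \<Phi> \<Longrightarrow> refl_root \<alpha> \<gamma> \<in> \<Phi>"
  using root_system unfolding root_system_def by auto

lemma uminus_root: "\<alpha> \<in> \<Phi> \<Longrightarrow> - \<alpha> \<in> \<Phi>"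
  using refl_root_root[of \<alpha> \<alpha>] refl_root_self[OF root_nonzero] by auto

lemma root_multiple: "\<alpha> \<in> \<Phi> \<Longrightarrow> c *\<^sub>R \<alpha> \<in> \<Phi> \<Longrightarrow> c = 1 \<or> c = -1"
  using root_system unfolding root_system_def by auto

lemma positive_multiples_of_roots_eq:
  assumes "\<alpha> \<in> \<Phi>" "\<gamma> \<in> \<Phi>" "0 < c" "0 < d" "c *\<^sub>R \<alpha> = d *\<^sub>R \<gamma>"
  shows "\<alpha> = \<gamma>"
proof -
  have "\<alpha> = (1 / c) *\<^sub>R (c *\<^sub>R \<alpha>)" using assms(3) by simp
  also have "\<dots> = (d / c) *\<^sub>R \<gamma>" using assms(5) by simp
  finally have "\<alpha> = (d / c) *\<^sub>R \<gamma>" .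
  moreover have "d / c = 1"
    using root_multiple[OF assms(2), of "d / c"] assms(1,3,4) calculation
    by (smt (verit) divide_pos_pos)
  ultimately show ?thesis by simp
qed

lemma of_int_cartan_int: "\<alpha> \<in> \<Phi> \<Longrightarrow> \<gamma> \<in> \<Phi> \<Longrightarrow> of_int (cartan_int \<gamma> \<alpha>) = cartan \<gamma> \<alpha>"
  using root_system unfolding root_system_def cartan_int_def cartan_def
  by (metis Ints_cases floor_of_int)

lemma cartan_int_refl_root:
  assumes "\<alpha> \<in> \<Phi>" "\<gamma> \<in> \<Phi>"
  shows "cartan_int \<alpha> (refl_root \<alpha> \<gamma>) = - cartan_int \<alpha> \<gamma>"
proof -
  have "(of_int (cartan_int \<alpha> (refl_root \<alpha> \<gamma>)) :: real) = of_int (- cartan_int \<alpha> \<gamma>)"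
    using assms of_int_cartan_int refl_root_root cartan_refl_root[OF root_nonzero] by simp
  then show ?thesis by linarith
qed

lemma cartan_int_uminus_right:
  assumes "\<alpha> \<in> \<Phi>" "\<gamma> \<in> \<Phi>"
  shows "cartan_int \<alpha> (- \<gamma>) = - cartan_int \<alpha> \<gamma>"
proof -
  have "(of_int (cartan_int \<alpha> (- \<gamma>)) :: real) = of_int (- cartan_int \<alpha> \<gamma>)"
    using assms of_int_cartan_int uminus_root cartan_uminus_right by simp
  then show ?thesis by linarith
qed

lemma even_cartan_int_if_refl_root_eq_pm:
  assumes \<alpha>: "\<alpha> \<in> \<Phi>" and \<gamma>: "\<gamma> \<in> \<Phi>" and "refl_root \<alpha> \<gamma> = \<gamma> \<or> refl_root \<alpha> \<gamma> = - \<gamma>"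
  shows "even (cartan_int \<alpha> \<gamma>)"
  using assms(3)
proof
  assume "refl_root \<alpha> \<gamma> = \<gamma>"
  then have "\<gamma> \<bullet> \<alpha> = 0" using root_nonzero[OF \<alpha>] by (simp add: refl_root_eq cartan_def)
  then have "cartan \<alpha> \<gamma> = 0" by (simp add: cartan_def inner_commute)
  then show ?thesis using of_int_cartan_int[OF \<gamma> \<alpha>] by simp
next
  assume "refl_root \<alpha> \<gamma> = - \<gamma>"
  then have "(2::real) *\<^sub>R \<gamma> = cartan \<gamma> \<alpha> *\<^sub>R \<alpha>"
    unfolding refl_root_eq by (simp add: algebra_simps scaleR_2)
  then have "(1/2::real) *\<^sub>R (2 *\<^sub>R \<gamma>) = (1/2) *\<^sub>R (cartan \<gamma> \<alpha> *\<^sub>R \<alpha>)" by (rule arg_cong)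
  then have "\<gamma> = (cartan \<gamma> \<alpha> / 2) *\<^sub>R \<alpha>" by simp
  then have "\<gamma> = \<alpha> \<or> \<gamma> = - \<alpha>" using root_multiple[OF \<alpha>, of "cartan \<gamma> \<alpha> / 2"] \<gamma> by auto
  then have "cartan \<alpha> \<gamma> = 2 \<or> cartan \<alpha> \<gamma> = -2"
    using cartan_self[OF root_nonzero[OF \<alpha>]] cartan_uminus_right[of \<alpha> \<alpha>] by auto
  then show ?thesis by (auto simp: cartan_int_def)
qed

definition root_half :: "'a set \<Rightarrow> bool" where
  "root_half P \<longleftrightarrow> P \<subseteq> \<Phi> \<and> (\<forall>\<gamma>\<in>\<Phi>. \<gamma> \<in> P \<longleftrightarrow> - \<gamma> \<notin> P)"

text \<open>The reflection \<open>s\<^sub>\<alpha>\<close> followed by the sign change that lands back in \<open>P\<close> is an involution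
  of \<open>P\<close> preserving \<open>\<bar>\<langle>\<alpha>, \<gamma>\<^sup>\<or>\<rangle>\<bar>\<close>; its fixed points have even pairing with \<open>\<alpha>\<close>.\<close>

lemma even_sum_cartan_int_root_half:
  assumes "root_half P" and \<alpha>: "\<alpha> \<in> \<Phi>"
  shows "even (\<Sum>\<gamma>\<in>P. cartan_int \<alpha> \<gamma>)"
proof -
  have P: "P \<subseteq> \<Phi>" "\<And>\<gamma>. \<gamma> \<in> \<Phi> \<Longrightarrow> \<gamma> \<in> P \<longleftrightarrow> - \<gamma> \<notin> P"
    using assms(1) unfolding root_half_def by auto
  let ?s = "refl_root \<alpha>"
  define \<tau> where "\<tau> \<gamma> = (if ?s \<gamma> \<in> P then ?s \<gamma> else - ?s \<gamma>)" for \<gamma>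
  define h where "h \<gamma> = \<bar>cartan_int \<alpha> \<gamma>\<bar>" for \<gamma>
  have ss: "?s (?s x) = x" for x using refl_root_refl_root[OF root_nonzero[OF \<alpha>]] .
  have s\<gamma>: "?s \<gamma> \<in> \<Phi>" if "\<gamma> \<in> P" for \<gamma> using that P(1) \<alpha> refl_root_root by auto
  have \<tau>P: "\<tau> \<gamma> \<in> P" if "\<gamma> \<in> P" for \<gamma>
    using P(2)[OF s\<gamma>[OF that]] unfolding \<tau>_def by auto
  have \<tau>\<tau>: "\<tau> (\<tau> \<gamma>) = \<gamma>" if "\<gamma> \<in> P" for \<gamma>
  proof (cases "?s \<gamma> \<in> P")
    case True
    then show ?thesis using that ss unfolding \<tau>_def by simp
  next
    case False
    have "- \<gamma> \<notin> P" using P that by auto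
    then show ?thesis using False ss unfolding \<tau>_def by (simp add: refl_root_uminus)
  qed
  have h\<tau>: "h (\<tau> \<gamma>) = h \<gamma>" if "\<gamma> \<in> P" for \<gamma>
  proof -
    have "\<gamma> \<in> \<Phi>" using that P(1) by auto
    then have "cartan_int \<alpha> (\<tau> \<gamma>) = - cartan_int \<alpha> \<gamma> \<or> cartan_int \<alpha> (\<tau> \<gamma>) = cartan_int \<alpha> \<gamma>"
      unfolding \<tau>_def
      using cartan_int_refl_root[OF \<alpha>] cartan_int_uminus_right[OF \<alpha> s\<gamma>[OF that]] by simp
    then show ?thesis unfolding h_def by auto
  qed
  have "even (h \<gamma>)" if "\<gamma> \<in> P" "\<tau> \<gamma> = \<gamma>" for \<gamma>
  proof -
    have "?s \<gamma> = \<gamma> \<or> ?s \<gamma> = - \<gamma>" using that(2) unfolding \<tau>_def by (metis minus_minus)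
    then show ?thesis
      using even_cartan_int_if_refl_root_eq_pm[OF \<alpha>] that(1) P(1) unfolding h_def by auto
  qed
  then have "even (sum h {\<gamma>\<in>P. \<tau> \<gamma> = \<gamma>})" by (auto intro: dvd_sum)
  moreover have "even (sum h P - sum h {\<gamma>\<in>P. \<tau> \<gamma> = \<gamma>})"
    using finite_subset[OF P(1) finite_roots] \<tau>P \<tau>\<tau> h\<tau> by (rule even_sum_diff_fixed_points)
  ultimately have "even (sum h P)" by simp
  moreover have "even (\<Sum>\<gamma>\<in>P. h \<gamma> - cartan_int \<alpha> \<gamma>)"
    by (rule dvd_sum) (auto simp: h_def abs_if)
  ultimately show ?thesis by (simp add: sum_subtractf)
qed

lemma half_sum_coroots_integral:
  assumes "root_half P" "\<alpha> \<in> \<Phi>"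
  shows "\<alpha> \<bullet> half_sum_coroots P \<in> \<int>"
proof -
  have "P \<subseteq> \<Phi>" using assms(1) unfolding root_half_def by auto
  then have "\<alpha> \<bullet> half_sum_coroots P = of_int (\<Sum>\<gamma>\<in>P. cartan_int \<alpha> \<gamma>) / 2"
    using assms(2) by (auto simp: inner_half_sum_coroots of_int_cartan_int intro!: sum.cong)
  moreover obtain k where "(\<Sum>\<gamma>\<in>P. cartan_int \<alpha> \<gamma>) = 2 * k"
    using even_sum_cartan_int_root_half[OF assms] by blast
  ultimately show ?thesis by simp
qed

lemma exists_coweight_one_on_orthogonal_roots:
  fixes \<beta> :: "nat \<Rightarrow> 'a" and r :: nat
  assumes "\<And>\<alpha>. \<alpha> \<in> \<Phi> \<Longrightarrow> \<alpha> \<bullet> \<omega> \<in> \<int>"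
    and "\<And>i. i < r \<Longrightarrow> \<beta> i \<in> \<Phi>"
    and "\<And>i j. i < r \<Longrightarrow> j < r \<Longrightarrow> i \<noteq> j \<Longrightarrow> \<beta> i \<bullet> \<beta> j = 0"
    and "\<And>i. i < r \<Longrightarrow> (\<beta> i \<bullet> \<omega> - 1) / 2 \<in> \<int>"
  shows "\<exists>\<omega>'. (\<forall>\<alpha>\<in>\<Phi>. \<alpha> \<bullet> \<omega>' \<in> \<int>) \<and> (\<forall>i<r. \<beta> i \<bullet> \<omega>' = 1)"
proof -
  define c where "c j = (\<beta> j \<bullet> \<omega> - 1) / 2" for j
  define \<omega>' where "\<omega>' = \<omega> - (\<Sum>j<r. c j *\<^sub>R coroot (\<beta> j))"
  have inner_\<omega>': "x \<bullet> \<omega>' = x \<bullet> \<omega> - (\<Sum>j<r. c j * cartan x (\<beta> j))" for x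
    unfolding \<omega>'_def by (simp add: inner_diff_right inner_sum_right inner_coroot)
  have "\<alpha> \<bullet> \<omega>' \<in> \<int>" if "\<alpha> \<in> \<Phi>" for \<alpha>
    unfolding inner_\<omega>' using that assms(1,2,4) root_system
    by (intro Ints_diff Ints_sum Ints_mult) (auto simp: c_def root_system_def cartan_def)
  moreover have "\<beta> i \<bullet> \<omega>' = 1" if i: "i < r" for i
  proof -
    have "(\<Sum>j<r. c j * cartan (\<beta> i) (\<beta> j)) = (\<Sum>j<r. if j = i then 2 * c i else 0)"
      using assms(3)[OF i] cartan_self[OF root_nonzero[OF assms(2)[OF i]]]
      by (intro sum.cong) (auto simp: cartan_def)
    also have "\<dots> = 2 * c i" using i by simp
    finally show ?thesis unfolding inner_\<omega>' by (simp add: c_def)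
  qed
  ultimately show ?thesis by blast
qed

end

section \<open>A half adapted to strongly orthogonal roots\<close>

definition chosen_half :: "'a::real_vector set" where
  "chosen_half = {x. x \<noteq> 0 \<and> (SOME y. y \<in> {x, -x}) = x}"

lemma chosen_half_iff_uminus_not: "(x::'a::real_vector) \<noteq> 0 \<Longrightarrow> x \<in> chosen_half \<longleftrightarrow> - x \<notin> chosen_half"
proof -
  assume x: "x \<noteq> 0"
  define z where "z = (SOME y. y \<in> {x, -x})"
  have z: "z \<in> {x, -x}" unfolding z_def by (rule someI) auto
  have "(SOME y. y \<in> {-x, - (-x)}) = z" unfolding z_def by (simp add: insert_commute)
  moreover have "x \<noteq> - x"
  proof
    assume "x = - x"
    then have "(2::real) *\<^sub>R x = 0" by (metis add.right_inverse scaleR_2)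
    then show False using x by simp
  qed
  ultimately show ?thesis using z x unfolding chosen_half_def z_def by auto
qed

lemma first_nonzero_pos_iff_not_neg:
  fixes v :: "nat \<Rightarrow> real"
  assumes "\<exists>j<r. v j \<noteq> 0"
  shows "(\<exists>i<r. 0 < v i \<and> (\<forall>j<i. v j = 0)) \<longleftrightarrow> \<not> (\<exists>i<r. v i < 0 \<and> (\<forall>j<i. v j = 0))"
proof -
  obtain i where i: "i < r" "v i \<noteq> 0" and least: "\<forall>m<i. \<not> (m < r \<and> v m \<noteq> 0)"
    using assms exists_least_iff[of "\<lambda>j. j < r \<and> v j \<noteq> 0"] by auto
  have below: "\<forall>j<i. v j = 0" using least i(1) by auto
  have unique: "i' = i" if "v i' \<noteq> 0" "\<forall>j<i'. v j = 0" for i'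
  proof (rule linorder_cases[of i' i])
    assume "i' < i"
    then show ?thesis using below that(1) by auto
  next
    assume "i < i'"
    then show ?thesis using that(2) i(2) by auto
  qed
  show ?thesis
  proof
    assume "\<exists>i<r. 0 < v i \<and> (\<forall>j<i. v j = 0)"
    then obtain i' where "0 < v i'" "\<forall>j<i'. v j = 0" by blast
    then have "0 < v i" using unique[of i'] by auto
    show "\<not> (\<exists>i<r. v i < 0 \<and> (\<forall>j<i. v j = 0))"
    proof
      assume "\<exists>i<r. v i < 0 \<and> (\<forall>j<i. v j = 0)"
      then obtain i'' where "v i'' < 0" "\<forall>j<i''. v j = 0" by blast
      then show False using unique[of i''] \<open>0 < v i\<close> by auto
    qed
  next
    assume "\<not> (\<exists>i<r. v i < 0 \<and> (\<forall>j<i. v j = 0))"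
    then have "0 < v i" using i below by (auto simp: linorder_neq_iff)
    then show "\<exists>i<r. 0 < v i \<and> (\<forall>j<i. v j = 0)" using i below by blast
  qed
qed

locale strongly_orthogonal_roots = root_sys +
  fixes \<beta> :: "nat \<Rightarrow> 'a" and r :: nat
  assumes root_\<beta>: "i < r \<Longrightarrow> \<beta> i \<in> \<Phi>"
    and strongly_orthogonal_\<beta>: "i < r \<Longrightarrow> j < r \<Longrightarrow> i \<noteq> j \<Longrightarrow> strongly_orthogonal \<Phi> (\<beta> i) (\<beta> j)"
begin

lemma inner_\<beta>_\<beta>: "i < r \<Longrightarrow> j < r \<Longrightarrow> i \<noteq> j \<Longrightarrow> \<beta> i \<bullet> \<beta> j = 0"
  using strongly_orthogonal_\<beta> unfolding strongly_orthogonal_def by auto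

lemma add_\<beta>_not_root: "i < r \<Longrightarrow> j < r \<Longrightarrow> i \<noteq> j \<Longrightarrow> \<beta> i + \<beta> j \<notin> \<Phi>"
  using strongly_orthogonal_\<beta> unfolding strongly_orthogonal_def by auto

lemma \<beta>_nonzero: "i < r \<Longrightarrow> \<beta> i \<noteq> 0"
  using root_nonzero root_\<beta> by auto

lemma inner_\<beta>_pos: "i < r \<Longrightarrow> 0 < \<beta> i \<bullet> \<beta> i"
  using inner_root_pos root_\<beta> by auto

abbreviation s :: "nat \<Rightarrow> 'a \<Rightarrow> 'a" where
  "s i \<equiv> refl_root (\<beta> i)"

lemma inner_\<beta>_refl_other: "i < r \<Longrightarrow> j < r \<Longrightarrow> j \<noteq> i \<Longrightarrow> \<beta> j \<bullet> s i x = \<beta> j \<bullet> x"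
  unfolding refl_root_eq using inner_\<beta>_\<beta> by (simp add: inner_diff_right)

lemma inner_\<beta>_refl_self: "i < r \<Longrightarrow> \<beta> i \<bullet> s i x = - (\<beta> i \<bullet> x)"
  using inner_root_refl_root[OF \<beta>_nonzero] .

lemma cartan_int_\<beta>_refl_other:
  "i < r \<Longrightarrow> k < r \<Longrightarrow> k \<noteq> i \<Longrightarrow> cartan_int (\<beta> i) (s k \<gamma>) = cartan_int (\<beta> i) \<gamma>"
  unfolding cartan_int_def cartan_def
  by (simp add: inner_\<beta>_refl_other inner_refl_root_refl_root \<beta>_nonzero)

definition perp :: "'a \<Rightarrow> 'a" where
  "perp x = x - (\<Sum>j<r. ((x \<bullet> \<beta> j) / (\<beta> j \<bullet> \<beta> j)) *\<^sub>R \<beta> j)"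

lemma perp_diff: "perp (x - y) = perp x - perp y"
  unfolding perp_def
  by (simp add: inner_diff_left diff_divide_distrib scaleR_diff_left sum_subtractf algebra_simps)

lemma perp_scaleR: "perp (c *\<^sub>R x) = c *\<^sub>R perp x"
  unfolding perp_def by (simp add: scaleR_diff_right scaleR_sum_right)

lemma perp_uminus: "perp (- x) = - perp x"
  using perp_scaleR[of "-1" x] by simp

lemma perp_\<beta>: "i < r \<Longrightarrow> perp (\<beta> i) = 0"
proof -
  assume i: "i < r"
  have "(\<Sum>j<r. ((\<beta> i \<bullet> \<beta> j) / (\<beta> j \<bullet> \<beta> j)) *\<^sub>R \<beta> j) = (\<Sum>j<r. if j = i then \<beta> i else 0)"
    by (rule sum.cong) (use inner_\<beta>_\<beta> \<beta>_nonzero i in auto)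
  then show ?thesis unfolding perp_def using i by simp
qed

lemma perp_refl: "i < r \<Longrightarrow> perp (s i x) = perp x"
  unfolding refl_root_eq by (simp add: perp_diff perp_scaleR perp_\<beta>)

lemma eq_sum_\<beta>_if_perp_zero:
  assumes "perp x = 0" "S \<subseteq> {..<r}" "\<And>j. j < r \<Longrightarrow> j \<notin> S \<Longrightarrow> \<beta> j \<bullet> x = 0"
  shows "x = (\<Sum>j\<in>S. ((x \<bullet> \<beta> j) / (\<beta> j \<bullet> \<beta> j)) *\<^sub>R \<beta> j)"
proof -
  have "x = (\<Sum>j<r. ((x \<bullet> \<beta> j) / (\<beta> j \<bullet> \<beta> j)) *\<^sub>R \<beta> j)"
    using assms(1) unfolding perp_def by simp
  also have "\<dots> = (\<Sum>j\<in>S. ((x \<bullet> \<beta> j) / (\<beta> j \<bullet> \<beta> j)) *\<^sub>R \<beta> j)"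
    by (rule sum.mono_neutral_right) (use assms(2,3) in \<open>auto simp: inner_commute\<close>)
  finally show ?thesis .
qed

definition support :: "'a \<Rightarrow> nat set" where
  "support x = {j. j < r \<and> \<beta> j \<bullet> x \<noteq> 0}"

lemma support_refl: "k < r \<Longrightarrow> support (s k x) = support x"
  unfolding support_def using inner_\<beta>_refl_other inner_\<beta>_refl_self
  by (metis neg_equal_0_iff_equal)

definition next_support :: "nat \<Rightarrow> 'a \<Rightarrow> nat" where
  "next_support i x = (LEAST k. k \<in> support x \<and> i < k)"

lemma next_support:
  assumes "k \<in> support x" "i < k"
  shows "next_support i x \<in> support x" "i < next_support i x" "next_support i x \<le> k"
    and "\<And>j. i < j \<Longrightarrow> j < next_support i x \<Longrightarrow> \<beta> j \<bullet> x = 0"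
proof -
  show n: "next_support i x \<in> support x" "i < next_support i x"
    unfolding next_support_def using LeastI[of "\<lambda>k. k \<in> support x \<and> i < k", OF conjI[OF assms]]
    by auto
  show le: "next_support i x \<le> k" unfolding next_support_def using assms by (simp add: Least_le)
  fix j assume "i < j" "j < next_support i x"
  then have "j \<notin> support x" using not_less_Least[of j "\<lambda>k. k \<in> support x \<and> i < k"]
    unfolding next_support_def by auto
  moreover have "j < r" using n(1) \<open>j < next_support i x\<close> unfolding support_def by auto
  ultimately show "\<beta> j \<bullet> x = 0" unfolding support_def by auto
qed

definition lead :: "nat \<Rightarrow> 'a set" where
  "lead i = {\<gamma>\<in>\<Phi>. perp \<gamma> = 0 \<and> 0 < \<beta> i \<bullet> \<gamma> \<and> (\<forall>j<i. \<beta> j \<bullet> \<gamma> = 0)}"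

definition pos_roots :: "'a set" where
  "pos_roots = {\<gamma>\<in>\<Phi>. perp \<gamma> \<noteq> 0 \<and> perp \<gamma> \<in> chosen_half} \<union> (\<Union>i<r. lead i)"

lemma root_half_pos_roots: "root_half pos_roots"
  unfolding root_half_def
proof (intro conjI ballI)
  show "pos_roots \<subseteq> \<Phi>" unfolding pos_roots_def lead_def by auto
  fix \<gamma> assume \<gamma>: "\<gamma> \<in> \<Phi>"
  show "\<gamma> \<in> pos_roots \<longleftrightarrow> - \<gamma> \<notin> pos_roots"
  proof (cases "perp \<gamma> = 0")
    case False
    then show ?thesis using \<gamma> uminus_root chosen_half_iff_uminus_not[OF False]
      unfolding pos_roots_def lead_def by (auto simp: perp_uminus)
  next
    case True
    have "\<exists>j<r. \<beta> j \<bullet> \<gamma> \<noteq> 0"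
      using eq_sum_\<beta>_if_perp_zero[OF True, of "{}"] root_nonzero[OF \<gamma>] by auto
    from first_nonzero_pos_iff_not_neg[of r "\<lambda>j. \<beta> j \<bullet> \<gamma>", OF this]
    show ?thesis using \<gamma> uminus_root True unfolding pos_roots_def lead_def by (auto simp: perp_uminus)
  qed
qed

lemma lead_subset_pos_roots: "i < r \<Longrightarrow> lead i \<subseteq> pos_roots"
  unfolding pos_roots_def by auto

lemma \<beta>_in_lead: "i < r \<Longrightarrow> \<beta> i \<in> lead i"
  unfolding lead_def using root_\<beta> perp_\<beta> inner_\<beta>_pos inner_\<beta>_\<beta> by auto

lemma finite_lead: "finite (lead i)"
  using finite_roots unfolding lead_def by auto

text \<open>Only the roots of \<open>lead i\<close> contribute to \<open>\<langle>\<beta> i, \<rho>\<^sup>\<or>\<rangle>\<close>: the reflection \<open>s i\<close> maps every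
  other root of \<open>pos_roots\<close> pairing nontrivially with \<open>\<beta> i\<close> to another one, with opposite
  pairing.\<close>

lemma sum_cartan_int_pos_roots_eq_lead:
  assumes i: "i < r"
  shows "(\<Sum>\<gamma>\<in>pos_roots. cartan_int (\<beta> i) \<gamma>) = (\<Sum>\<gamma>\<in>lead i. cartan_int (\<beta> i) \<gamma>)"
proof -
  let ?A = "pos_roots - lead i"
  have fin: "finite pos_roots" using root_half_pos_roots finite_roots finite_subset
    unfolding root_half_def by auto
  have "(\<Sum>\<gamma>\<in>?A. cartan_int (\<beta> i) \<gamma>) = 0"
  proof (rule sum_eq_0_if_involution_negates[where \<tau> = "s i"])
    fix \<gamma> assume \<gamma>A: "\<gamma> \<in> ?A"
    then have \<gamma>: "\<gamma> \<in> \<Phi>" using root_half_pos_roots unfolding root_half_def by auto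
    show "s i (s i \<gamma>) = \<gamma>" using refl_root_refl_root[OF \<beta>_nonzero[OF i]] .
    show "cartan_int (\<beta> i) (s i \<gamma>) = - cartan_int (\<beta> i) \<gamma>"
      using cartan_int_refl_root[OF root_\<beta>[OF i] \<gamma>] .
    have s\<gamma>: "s i \<gamma> \<in> \<Phi>" using refl_root_root[OF root_\<beta>[OF i] \<gamma>] .
    show "s i \<gamma> \<in> ?A"
    proof (cases "perp \<gamma> = 0")
      case False
      then show ?thesis using \<gamma>A s\<gamma> perp_refl[OF i] unfolding pos_roots_def lead_def by auto
    next
      case True
      then obtain k where k: "k < r" "0 < \<beta> k \<bullet> \<gamma>" "\<forall>j<k. \<beta> j \<bullet> \<gamma> = 0"
        using \<gamma>A unfolding pos_roots_def lead_def by auto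
      have "k \<noteq> i" using \<gamma>A k True \<gamma> unfolding lead_def by auto
      then consider "k < i" | "i < k" by linarith
      then show ?thesis
      proof cases
        case 1
        then have same: "\<beta> j \<bullet> s i \<gamma> = \<beta> j \<bullet> \<gamma>" if "j \<le> k" for j
          using inner_\<beta>_refl_other[OF i, of j \<gamma>] that k(1) by auto
        have "s i \<gamma> \<in> lead k" unfolding lead_def using s\<gamma> perp_refl[OF i] True k same by auto
        moreover have "s i \<gamma> \<notin> lead i" unfolding lead_def using same[of k] k 1 by auto
        ultimately show ?thesis using lead_subset_pos_roots[OF k(1)] by auto
      next
        case 2
        then have "\<gamma> \<bullet> \<beta> i = 0" using k by (simp add: inner_commute)
        then show ?thesis using \<gamma>A refl_root_orthogonal[OF \<open>\<gamma> \<bullet> \<beta> i = 0\<close>] by simp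
      qed
    qed
  qed (use fin in auto)
  then show ?thesis
    using sum.subset_diff[OF lead_subset_pos_roots[OF i] fin, where g = "cartan_int (\<beta> i)"] by simp
qed

lemma sum_cartan_int_lead:
  assumes i: "i < r"
  shows "(\<Sum>\<gamma>\<in>lead i. cartan_int (\<beta> i) \<gamma>) = 2 + (\<Sum>\<gamma>\<in>lead i - {\<beta> i}. cartan_int (\<beta> i) \<gamma>)"
proof -
  have "cartan_int (\<beta> i) (\<beta> i) = 2"
    using cartan_self[OF \<beta>_nonzero[OF i]] by (simp add: cartan_int_def)
  then show ?thesis using sum.remove[OF finite_lead \<beta>_in_lead[OF i], of "cartan_int (\<beta> i)"] by simp
qed

lemma lead_other_has_next_support:
  assumes "\<gamma> \<in> lead i - {\<beta> i}" "i < r"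
  shows "\<exists>k\<in>support \<gamma>. i < k"
proof (rule ccontr)
  assume none: "\<not> ?thesis"
  have \<gamma>: "\<gamma> \<in> \<Phi>" "perp \<gamma> = 0" "0 < \<beta> i \<bullet> \<gamma>" "\<forall>j<i. \<beta> j \<bullet> \<gamma> = 0" "\<gamma> \<noteq> \<beta> i"
    using assms unfolding lead_def by auto
  have "\<beta> j \<bullet> \<gamma> = 0" if "j < r" "j \<noteq> i" for j
  proof (cases "j < i")
    case False
    then show ?thesis using none that unfolding support_def by auto
  qed (use \<gamma>(4) in auto)
  then have "1 *\<^sub>R \<gamma> = ((\<gamma> \<bullet> \<beta> i) / (\<beta> i \<bullet> \<beta> i)) *\<^sub>R \<beta> i"
    using eq_sum_\<beta>_if_perp_zero[OF \<gamma>(2), of "{i}"] assms(2) by auto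
  moreover have "0 < (\<gamma> \<bullet> \<beta> i) / (\<beta> i \<bullet> \<beta> i)"
    using \<gamma>(3) inner_\<beta>_pos[OF assms(2)] by (simp add: inner_commute)
  ultimately have "\<gamma> = \<beta> i"
    using positive_multiples_of_roots_eq[OF \<gamma>(1) root_\<beta>[OF assms(2)] zero_less_one] by blast
  then show False using \<gamma>(5) by contradiction
qed

lemma refl_lead_other:
  assumes "\<gamma> \<in> lead i - {\<beta> i}" "i < k" "k < r"
  shows "s k \<gamma> \<in> lead i - {\<beta> i}"
proof -
  have \<gamma>: "\<gamma> \<in> \<Phi>" "perp \<gamma> = 0" "0 < \<beta> i \<bullet> \<gamma>" "\<forall>j<i. \<beta> j \<bullet> \<gamma> = 0" "\<gamma> \<noteq> \<beta> i"
    using assms unfolding lead_def by auto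
  have i: "i < r" using assms by auto
  have "s k \<gamma> \<noteq> \<beta> i"
  proof
    assume "s k \<gamma> = \<beta> i"
    then have "\<gamma> = s k (\<beta> i)" using refl_root_refl_root[OF \<beta>_nonzero[OF assms(3)]] by metis
    also have "\<dots> = \<beta> i" using refl_root_orthogonal inner_\<beta>_\<beta>[OF i assms(3)] assms(2) by simp
    finally show False using \<gamma>(5) by simp
  qed
  then show ?thesis
    using \<gamma> assms refl_root_root[OF root_\<beta>] perp_refl inner_\<beta>_refl_other
    unfolding lead_def by auto
qed

definition lead_plus :: "nat \<Rightarrow> 'a set" where
  "lead_plus i = {\<gamma>\<in>lead i - {\<beta> i}. 0 < \<beta> (next_support i \<gamma>) \<bullet> \<gamma>}"

definition lead_minus :: "nat \<Rightarrow> 'a set" where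
  "lead_minus i = {\<gamma>\<in>lead i - {\<beta> i}. \<beta> (next_support i \<gamma>) \<bullet> \<gamma> < 0}"

lemma sum_cartan_int_lead_other:
  assumes i: "i < r"
  shows "(\<Sum>\<gamma>\<in>lead i - {\<beta> i}. cartan_int (\<beta> i) \<gamma>) = 2 * (\<Sum>\<gamma>\<in>lead_plus i. cartan_int (\<beta> i) \<gamma>)"
proof -
  define \<sigma> where "\<sigma> \<gamma> = s (next_support i \<gamma>) \<gamma>" for \<gamma>
  have \<sigma>: "\<sigma> \<gamma> \<in> lead i - {\<beta> i}" "next_support i (\<sigma> \<gamma>) = next_support i \<gamma>"
    "\<beta> (next_support i \<gamma>) \<bullet> \<sigma> \<gamma> = - (\<beta> (next_support i \<gamma>) \<bullet> \<gamma>)"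
    "\<sigma> (\<sigma> \<gamma>) = \<gamma>" "cartan_int (\<beta> i) (\<sigma> \<gamma>) = cartan_int (\<beta> i) \<gamma>"
    if \<gamma>: "\<gamma> \<in> lead i - {\<beta> i}" for \<gamma>
  proof -
    obtain k where "k \<in> support \<gamma>" "i < k" using lead_other_has_next_support[OF \<gamma> i] by blast
    note n = next_support[OF this]
    have nr: "next_support i \<gamma> < r" using n(1) unfolding support_def by auto
    show "\<sigma> \<gamma> \<in> lead i - {\<beta> i}" unfolding \<sigma>_def using refl_lead_other[OF \<gamma> n(2) nr] .
    have "support (\<sigma> \<gamma>) = support \<gamma>" unfolding \<sigma>_def using support_refl[OF nr] .
    then show nn: "next_support i (\<sigma> \<gamma>) = next_support i \<gamma>"
      by (simp only: next_support_def)
    show "\<beta> (next_support i \<gamma>) \<bullet> \<sigma> \<gamma> = - (\<beta> (next_support i \<gamma>) \<bullet> \<gamma>)"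
      unfolding \<sigma>_def using inner_\<beta>_refl_self[OF nr] .
    show "\<sigma> (\<sigma> \<gamma>) = \<gamma>"
      using nn refl_root_refl_root[OF \<beta>_nonzero[OF nr]] unfolding \<sigma>_def by simp
    show "cartan_int (\<beta> i) (\<sigma> \<gamma>) = cartan_int (\<beta> i) \<gamma>"
      unfolding \<sigma>_def using cartan_int_\<beta>_refl_other[OF i nr] n(2) by simp
  qed
  have split: "lead i - {\<beta> i} = lead_plus i \<union> lead_minus i"
  proof -
    have "\<beta> (next_support i \<gamma>) \<bullet> \<gamma> \<noteq> 0" if "\<gamma> \<in> lead i - {\<beta> i}" for \<gamma>
      using lead_other_has_next_support[OF that i] next_support(1) unfolding support_def by blast
    then show ?thesis unfolding lead_plus_def lead_minus_def by (auto simp: linorder_neq_iff)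
  qed
  have disj: "lead_plus i \<inter> lead_minus i = {}" unfolding lead_plus_def lead_minus_def by auto
  have img: "\<sigma> ` lead_plus i = lead_minus i"
  proof
    show "\<sigma> ` lead_plus i \<subseteq> lead_minus i" using \<sigma> unfolding lead_plus_def lead_minus_def by auto
    show "lead_minus i \<subseteq> \<sigma> ` lead_plus i"
    proof
      fix \<gamma> assume \<gamma>: "\<gamma> \<in> lead_minus i"
      then have "\<sigma> \<gamma> \<in> lead_plus i" "\<gamma> = \<sigma> (\<sigma> \<gamma>)" using \<sigma> unfolding lead_plus_def lead_minus_def by auto
      then show "\<gamma> \<in> \<sigma> ` lead_plus i" by blast
    qed
  qed
  have "inj_on \<sigma> (lead_plus i)"
    by (rule inj_on_inverseI[where g = \<sigma>]) (use \<sigma> in \<open>auto simp: lead_plus_def\<close>)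
  then have "(\<Sum>\<gamma>\<in>lead_minus i. cartan_int (\<beta> i) \<gamma>) = (\<Sum>\<gamma>\<in>lead_plus i. cartan_int (\<beta> i) (\<sigma> \<gamma>))"
    using sum.reindex img by fastforce
  also have "\<dots> = (\<Sum>\<gamma>\<in>lead_plus i. cartan_int (\<beta> i) \<gamma>)"
    using \<sigma> unfolding lead_plus_def by (auto intro!: sum.cong)
  finally show ?thesis
    unfolding split using disj finite_lead
    by (simp add: sum.union_disjoint lead_plus_def lead_minus_def)
qed

definition lead_pair :: "nat \<Rightarrow> 'a set" where
  "lead_pair i = {\<gamma>\<in>lead_plus i. \<forall>k\<in>support \<gamma>. k \<le> next_support i \<gamma>}"

lemma even_sum_cartan_int_lead_plus_diff_pair:
  assumes i: "i < r"
  shows "even ((\<Sum>\<gamma>\<in>lead_plus i. cartan_int (\<beta> i) \<gamma>) - (\<Sum>\<gamma>\<in>lead_pair i. cartan_int (\<beta> i) \<gamma>))"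
proof -
  define third where "third \<gamma> = next_support (next_support i \<gamma>) \<gamma>" for \<gamma>
  define \<tau> where "\<tau> \<gamma> = (if \<gamma> \<in> lead_pair i then \<gamma> else s (third \<gamma>) \<gamma>)" for \<gamma>
  have \<tau>: "\<tau> \<gamma> \<in> lead_plus i \<and> \<tau> (\<tau> \<gamma>) = \<gamma> \<and> cartan_int (\<beta> i) (\<tau> \<gamma>) = cartan_int (\<beta> i) \<gamma>
      \<and> (\<tau> \<gamma> = \<gamma> \<longleftrightarrow> \<gamma> \<in> lead_pair i)"
    if \<gamma>: "\<gamma> \<in> lead_plus i" for \<gamma>
  proof (cases "\<gamma> \<in> lead_pair i")
    case False
    let ?n = "next_support i \<gamma>"
    obtain k where "k \<in> support \<gamma>" "i < k" using \<gamma> lead_other_has_next_support i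
      unfolding lead_plus_def by blast
    note n = next_support[OF this]
    obtain l where "l \<in> support \<gamma>" "?n < l" using False \<gamma> unfolding lead_pair_def by auto
    note t = next_support[OF this, folded third_def]
    have tr: "third \<gamma> < r" using t(1) unfolding support_def by auto
    have supp: "support (s (third \<gamma>) \<gamma>) = support \<gamma>" using support_refl[OF tr] .
    then have nn: "next_support i (s (third \<gamma>) \<gamma>) = ?n" "third (s (third \<gamma>) \<gamma>) = third \<gamma>"
      unfolding third_def next_support_def by simp_all
    have "s (third \<gamma>) \<gamma> \<in> lead i - {\<beta> i}"
      using refl_lead_other[OF _ _ tr] \<gamma> n(2) t(2) unfolding lead_plus_def by auto
    moreover have "\<beta> ?n \<bullet> s (third \<gamma>) \<gamma> = \<beta> ?n \<bullet> \<gamma>"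
      using inner_\<beta>_refl_other[OF tr _] n(1) t(2) unfolding support_def by auto
    ultimately have plus: "s (third \<gamma>) \<gamma> \<in> lead_plus i" using \<gamma> nn unfolding lead_plus_def by auto
    moreover have "s (third \<gamma>) \<gamma> \<notin> lead_pair i"
      using False \<gamma> supp nn unfolding lead_pair_def by auto
    moreover have "s (third \<gamma>) \<gamma> \<noteq> \<gamma>"
      using inner_\<beta>_refl_self[OF tr, of \<gamma>] t(1) unfolding support_def by auto
    moreover have "cartan_int (\<beta> i) (s (third \<gamma>) \<gamma>) = cartan_int (\<beta> i) \<gamma>"
      using cartan_int_\<beta>_refl_other[OF i tr] n(2) t(2) by simp
    ultimately show ?thesis
      using False nn refl_root_refl_root[OF \<beta>_nonzero[OF tr]] unfolding \<tau>_def by simp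
  qed (use \<gamma> \<tau>_def in auto)
  have "finite (lead_plus i)" using finite_lead unfolding lead_plus_def by auto
  then have "even ((\<Sum>\<gamma>\<in>lead_plus i. cartan_int (\<beta> i) \<gamma>)
      - (\<Sum>\<gamma>\<in>{\<gamma>\<in>lead_plus i. \<tau> \<gamma> = \<gamma>}. cartan_int (\<beta> i) \<gamma>))"
    by (rule even_sum_diff_fixed_points) (use \<tau> in auto)
  moreover have "{\<gamma>\<in>lead_plus i. \<tau> \<gamma> = \<gamma>} = lead_pair i" using \<tau> unfolding lead_pair_def by auto
  ultimately show ?thesis by simp
qed

end

section \<open>Roots with two nonzero coordinates\<close>

context strongly_orthogonal_roots
begin

lemma lead_pair_facts:
  assumes \<gamma>: "\<gamma> \<in> lead_pair i" and i: "i < r"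
  shows "\<gamma> \<in> \<Phi>" "perp \<gamma> = 0" "0 < \<beta> i \<bullet> \<gamma>" "0 < \<beta> (next_support i \<gamma>) \<bullet> \<gamma>"
    "i < next_support i \<gamma>" "next_support i \<gamma> < r"
    "\<And>j. j < r \<Longrightarrow> j \<noteq> i \<Longrightarrow> j \<noteq> next_support i \<gamma> \<Longrightarrow> \<beta> j \<bullet> \<gamma> = 0"
proof -
  have \<gamma>': "\<gamma> \<in> lead i - {\<beta> i}" "0 < \<beta> (next_support i \<gamma>) \<bullet> \<gamma>"
    and last: "\<forall>k\<in>support \<gamma>. k \<le> next_support i \<gamma>"
    using \<gamma> unfolding lead_pair_def lead_plus_def by auto
  obtain k where "k \<in> support \<gamma>" "i < k" using lead_other_has_next_support[OF \<gamma>'(1) i] by blast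
  note n = next_support[OF this]
  have lead: "\<gamma> \<in> \<Phi>" "perp \<gamma> = 0" "0 < \<beta> i \<bullet> \<gamma>" "\<forall>j<i. \<beta> j \<bullet> \<gamma> = 0"
    using \<gamma>'(1) unfolding lead_def by auto
  show "\<gamma> \<in> \<Phi>" "perp \<gamma> = 0" "0 < \<beta> i \<bullet> \<gamma>" "0 < \<beta> (next_support i \<gamma>) \<bullet> \<gamma>"
    "i < next_support i \<gamma>" "next_support i \<gamma> < r"
    using lead \<gamma>'(2) n(1,2) unfolding support_def by auto
  fix j assume j: "j < r" "j \<noteq> i" "j \<noteq> next_support i \<gamma>"
  consider "j < i" | "i < j" "j < next_support i \<gamma>" | "next_support i \<gamma> < j" using j by linarith
  then show "\<beta> j \<bullet> \<gamma> = 0"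
  proof cases
    case 3
    then show ?thesis using last j unfolding support_def by fastforce
  qed (use lead n(4) in auto)
qed

lemma lead_pair_eq:
  assumes "\<gamma> \<in> lead_pair i" "i < r"
  defines "k \<equiv> next_support i \<gamma>"
  shows "\<gamma> = ((\<gamma> \<bullet> \<beta> i) / (\<beta> i \<bullet> \<beta> i)) *\<^sub>R \<beta> i + ((\<gamma> \<bullet> \<beta> k) / (\<beta> k \<bullet> \<beta> k)) *\<^sub>R \<beta> k"
proof -
  note f = lead_pair_facts[OF assms(1,2), folded k_def]
  have "\<gamma> = (\<Sum>j\<in>{i, k}. ((\<gamma> \<bullet> \<beta> j) / (\<beta> j \<bullet> \<beta> j)) *\<^sub>R \<beta> j)"
    by (rule eq_sum_\<beta>_if_perp_zero) (use f assms(2) in auto)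
  then show ?thesis using f(5) by simp
qed

lemma lead_pair_cartan_int:
  assumes "\<gamma> \<in> lead_pair i" and i: "i < r"
  defines "k \<equiv> next_support i \<gamma>"
  shows "cartan_int \<gamma> (\<beta> i) * cartan_int (\<beta> i) \<gamma> + cartan_int \<gamma> (\<beta> k) * cartan_int (\<beta> k) \<gamma> = 4"
    and "0 < cartan_int \<gamma> (\<beta> i)" "0 < cartan_int (\<beta> i) \<gamma>"
    and "0 < cartan_int \<gamma> (\<beta> k)" "0 < cartan_int (\<beta> k) \<gamma>"
proof -
  note f = lead_pair_facts[OF assms(1,2), folded k_def]
  have pairs: "of_int (cartan_int \<gamma> (\<beta> j)) = cartan \<gamma> (\<beta> j)"
    "of_int (cartan_int (\<beta> j) \<gamma>) = cartan (\<beta> j) \<gamma>"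
    "0 < cartan \<gamma> (\<beta> j)" "0 < cartan (\<beta> j) \<gamma>" if "j = i \<or> j = k" for j
  proof -
    have j: "j < r" "0 < \<beta> j \<bullet> \<gamma>" using that f i by auto
    show "of_int (cartan_int \<gamma> (\<beta> j)) = cartan \<gamma> (\<beta> j)"
      "of_int (cartan_int (\<beta> j) \<gamma>) = cartan (\<beta> j) \<gamma>"
      using of_int_cartan_int f(1) root_\<beta>[OF j(1)] by auto
    show "0 < cartan \<gamma> (\<beta> j)" "0 < cartan (\<beta> j) \<gamma>"
      using j inner_\<beta>_pos inner_root_pos[OF f(1)] unfolding cartan_def by (auto simp: inner_commute)
  qed
  have "cartan \<gamma> (\<beta> i) * cartan (\<beta> i) \<gamma> + cartan \<gamma> (\<beta> k) * cartan (\<beta> k) \<gamma> = 4"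
    by (rule cartan_products_in_orthogonal_plane[OF _ _ _ _ lead_pair_eq[OF assms(1,2), folded k_def]])
      (use inner_\<beta>_\<beta> \<beta>_nonzero root_nonzero f i in auto)
  then have "(of_int (cartan_int \<gamma> (\<beta> i) * cartan_int (\<beta> i) \<gamma>
      + cartan_int \<gamma> (\<beta> k) * cartan_int (\<beta> k) \<gamma>) :: real) = 4"
    using pairs by simp
  then show "cartan_int \<gamma> (\<beta> i) * cartan_int (\<beta> i) \<gamma> + cartan_int \<gamma> (\<beta> k) * cartan_int (\<beta> k) \<gamma> = 4"
    by linarith
  show "0 < cartan_int \<gamma> (\<beta> i)" "0 < cartan_int (\<beta> i) \<gamma>"
    "0 < cartan_int \<gamma> (\<beta> k)" "0 < cartan_int (\<beta> k) \<gamma>"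
    using pairs[of i] pairs[of k] by (metis of_int_0_less_iff)+
qed

text \<open>Here strong orthogonality enters: a product \<open>2\<close> with odd \<open>\<langle>\<beta> i, \<gamma>\<^sup>\<or>\<rangle>\<close> would force
  \<open>\<gamma> = \<beta> i + \<beta> k\<close>, or \<open>\<gamma> = \<beta> i + \<beta> k / 2\<close> and then \<open>s\<^sub>\<gamma> (\<beta> i) = - \<beta> k / 2\<close> would be a root.\<close>

lemma lead_pair_cartan_int_product_odd:
  assumes \<gamma>: "\<gamma> \<in> lead_pair i" and i: "i < r" and odd: "odd (cartan_int (\<beta> i) \<gamma>)"
  shows "cartan_int \<gamma> (\<beta> i) * cartan_int (\<beta> i) \<gamma> \<in> {1, 3}"
proof -
  define k where "k = next_support i \<gamma>"
  note f = lead_pair_facts[OF \<gamma> i, folded k_def]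
  define ni where "ni = cartan_int \<gamma> (\<beta> i)"
  define fi where "fi = cartan_int (\<beta> i) \<gamma>"
  define nk where "nk = cartan_int \<gamma> (\<beta> k)"
  define fk where "fk = cartan_int (\<beta> k) \<gamma>"
  have pos: "0 < ni" "0 < fi" "0 < nk" "0 < fk" and sum4: "ni * fi + nk * fk = 4"
    using lead_pair_cartan_int[OF \<gamma> i] unfolding ni_def fi_def nk_def fk_def k_def by auto
  have "ni * fi \<noteq> 2"
  proof
    assume p2: "ni * fi = 2"
    have "fi \<le> ni * fi" using pos by simp
    then have "fi = 1 \<or> fi = 2" using p2 pos by linarith
    then have "fi = 1" using odd unfolding fi_def by auto
    then have ni2: "ni = 2" using p2 by simp
    have "nk \<le> nk * fk" using pos by simp
    moreover have "nk * fk = 2" using p2 sum4 by simp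
    ultimately have nk12: "nk = 1 \<or> nk = 2" using pos by linarith
    have "\<gamma> = (of_int ni / 2) *\<^sub>R \<beta> i + (of_int nk / 2) *\<^sub>R \<beta> k"
      using lead_pair_eq[OF \<gamma> i, folded k_def]
        of_int_cartan_int[OF root_\<beta>[OF i] f(1)] of_int_cartan_int[OF root_\<beta>[OF f(6)] f(1)]
      unfolding ni_def nk_def cartan_def by simp
    then have \<gamma>_eq: "\<gamma> = \<beta> i + (of_int nk / 2) *\<^sub>R \<beta> k" using ni2 by simp
    from nk12 show False
    proof
      assume "nk = 2"
      then show False using \<gamma>_eq add_\<beta>_not_root[OF i f(6)] f(1,5) by simp
    next
      assume "nk = 1"
      have "cartan (\<beta> i) \<gamma> = 1" using of_int_cartan_int[OF f(1) root_\<beta>[OF i]] \<open>fi = 1\<close>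
        unfolding fi_def by simp
      then have "refl_root \<gamma> (\<beta> i) = (- 1/2) *\<^sub>R \<beta> k" using \<gamma>_eq \<open>nk = 1\<close> by (simp add: refl_root_eq)
      then have "(- 1/2) *\<^sub>R \<beta> k \<in> \<Phi>" using refl_root_root[OF f(1) root_\<beta>[OF i]] by simp
      moreover have "(- 2) *\<^sub>R ((- 1/2) *\<^sub>R \<beta> k) = \<beta> k" by simp
      ultimately show False using root_multiple[of "(- 1/2) *\<^sub>R \<beta> k" "- 2"] root_\<beta>[OF f(6)] by simp
    qed
  qed
  moreover have "0 < ni * fi" "0 < nk * fk" using pos by simp_all
  ultimately have "ni * fi = 1 \<or> ni * fi = 3" using sum4 by linarith
  then show ?thesis unfolding ni_def fi_def by auto
qed

text \<open>\<open>\<psi> = - s\<^sub>\<gamma> (\<beta> m)\<close>.\<close>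

lemma lead_pair_flip:
  assumes \<gamma>: "\<gamma> \<in> lead_pair i" and i: "i < r" and m: "m = i \<or> m = next_support i \<gamma>"
    and three: "cartan_int \<gamma> (\<beta> m) * cartan_int (\<beta> m) \<gamma> = 3"
  defines "\<psi> \<equiv> cartan (\<beta> m) \<gamma> *\<^sub>R \<gamma> - \<beta> m"
  shows "\<psi> \<in> lead_pair i" "support \<psi> = support \<gamma>" "cartan_int \<psi> (\<beta> m) * cartan_int (\<beta> m) \<psi> = 1"
proof -
  define k where "k = next_support i \<gamma>"
  note f = lead_pair_facts[OF \<gamma> i, folded k_def]
  have mr: "m < r" and m_pos: "0 < \<beta> m \<bullet> \<gamma>" using m f i k_def by auto
  define c where "c = cartan (\<beta> m) \<gamma>"
  have c_pos: "0 < c" unfolding c_def cartan_def using m_pos inner_root_pos[OF f(1)] by simp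
  have \<psi>_refl: "\<psi> = - refl_root \<gamma> (\<beta> m)" unfolding \<psi>_def refl_root_eq by simp
  have \<psi>\<Phi>: "\<psi> \<in> \<Phi>" using \<psi>_refl refl_root_root[OF f(1) root_\<beta>[OF mr]] uminus_root by simp
  have \<psi>\<psi>: "\<psi> \<bullet> \<psi> = \<beta> m \<bullet> \<beta> m" using \<psi>_refl inner_refl_root_refl_root[OF root_nonzero[OF f(1)]] by simp
  have "cartan \<gamma> (\<beta> m) * c = 3"
    using three of_int_cartan_int[OF root_\<beta>[OF mr] f(1)] of_int_cartan_int[OF f(1) root_\<beta>[OF mr]]
    unfolding c_def by (metis of_int_mult of_int_numeral)
  then have "c * (\<beta> m \<bullet> \<gamma>) = 3/2 * (\<beta> m \<bullet> \<beta> m)"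
    using inner_\<beta>_pos[OF mr] unfolding cartan_def by (simp add: field_simps inner_commute)
  then have inner_m: "\<beta> m \<bullet> \<psi> = (\<beta> m \<bullet> \<beta> m) / 2"
    unfolding \<psi>_def c_def[symmetric] by (simp add: inner_diff_right)
  then have inner_m_pos: "0 < \<beta> m \<bullet> \<psi>" using inner_\<beta>_pos[OF mr] by linarith
  have inner_other: "\<beta> j \<bullet> \<psi> = c * (\<beta> j \<bullet> \<gamma>)" if "j < r" "j \<noteq> m" for j
    unfolding \<psi>_def c_def[symmetric] using inner_\<beta>_\<beta>[OF that(1) mr that(2)] by (simp add: inner_diff_right)
  show supp: "support \<psi> = support \<gamma>"
    unfolding support_def using inner_m_pos m_pos inner_other c_pos by fastforce
  then have n: "next_support i \<psi> = k" unfolding k_def by (simp only: next_support_def)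
  have pos_other: "0 < \<beta> j \<bullet> \<psi>" if "j = i \<or> j = k" for j
    using that inner_m_pos inner_other[of j] f i c_pos by (cases "j = m") auto
  have below: "\<forall>j<i. \<beta> j \<bullet> \<psi> = 0"
  proof (intro allI impI)
    fix j assume "j < i"
    then have "j < r" "j \<noteq> m" "j \<noteq> i" "j \<noteq> k" using m f(5) i k_def by auto
    then show "\<beta> j \<bullet> \<psi> = 0" using inner_other f(7) by simp
  qed
  have "perp \<psi> = 0" unfolding \<psi>_def using f(2) perp_\<beta>[OF mr] by (simp add: perp_diff perp_scaleR)
  then have "\<psi> \<in> lead i" unfolding lead_def using \<psi>\<Phi> pos_other[of i] below by auto
  moreover have "\<psi> \<noteq> \<beta> i" using pos_other[of k] inner_\<beta>_\<beta>[OF f(6) i] f(5) by auto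
  ultimately show "\<psi> \<in> lead_pair i"
    using \<gamma> supp n pos_other[of k] unfolding lead_pair_def lead_plus_def k_def by auto
  have "cartan \<psi> (\<beta> m) = 1" "cartan (\<beta> m) \<psi> = 1"
    unfolding cartan_def using inner_m \<psi>\<psi> inner_\<beta>_pos[OF mr] by (simp_all add: inner_commute)
  then show "cartan_int \<psi> (\<beta> m) * cartan_int (\<beta> m) \<psi> = 1" unfolding cartan_int_def by simp
qed

text \<open>The odd terms of the sum come from the roots with product \<open>1\<close> or \<open>3\<close>, and
  \<open>lead_pair_flip\<close> maps each of these two classes injectively into the other.\<close>

lemma even_sum_cartan_int_lead_pair:
  assumes i: "i < r"
  shows "even (\<Sum>\<gamma>\<in>lead_pair i. cartan_int (\<beta> i) \<gamma>)"
proof -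
  define p where "p \<gamma> = cartan_int \<gamma> (\<beta> i) * cartan_int (\<beta> i) \<gamma>" for \<gamma>
  define F1 where "F1 = {\<gamma>\<in>lead_pair i. p \<gamma> = 1}"
  define F3 where "F3 = {\<gamma>\<in>lead_pair i. p \<gamma> = 3}"
  have fin: "finite (lead_pair i)" using finite_lead unfolding lead_pair_def lead_plus_def by auto
  then have fin13: "finite F1" "finite F3" unfolding F1_def F3_def by auto
  have "odd (cartan_int (\<beta> i) \<gamma>) \<longleftrightarrow> p \<gamma> = 1 \<or> p \<gamma> = 3" if "\<gamma> \<in> lead_pair i" for \<gamma>
  proof
    assume "p \<gamma> = 1 \<or> p \<gamma> = 3"
    then have "odd (p \<gamma>)" by auto
    then show "odd (cartan_int (\<beta> i) \<gamma>)" unfolding p_def by simp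
  qed (use lead_pair_cartan_int_product_odd[OF that i] in \<open>auto simp: p_def\<close>)
  then have odd_eq: "{\<gamma>\<in>lead_pair i. odd (cartan_int (\<beta> i) \<gamma>)} = F1 \<union> F3"
    unfolding F1_def F3_def by auto
  define \<phi>3 where "\<phi>3 \<gamma> = cartan (\<beta> i) \<gamma> *\<^sub>R \<gamma> - \<beta> i" for \<gamma>
  define \<phi>1 where "\<phi>1 \<gamma> = cartan (\<beta> (next_support i \<gamma>)) \<gamma> *\<^sub>R \<gamma> - \<beta> (next_support i \<gamma>)" for \<gamma>
  have \<phi>3: "\<phi>3 \<gamma> \<in> F1" if "\<gamma> \<in> F3" for \<gamma>
    using lead_pair_flip[of \<gamma> i i, OF _ i] that unfolding F1_def F3_def p_def \<phi>3_def by auto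
  have \<phi>1: "\<phi>1 \<gamma> \<in> F3 \<and> next_support i (\<phi>1 \<gamma>) = next_support i \<gamma>" if \<gamma>: "\<gamma> \<in> F1" for \<gamma>
  proof -
    let ?k = "next_support i \<gamma>"
    have \<gamma>F: "\<gamma> \<in> lead_pair i" and "p \<gamma> = 1" using \<gamma> unfolding F1_def by auto
    then have "cartan_int \<gamma> (\<beta> ?k) * cartan_int (\<beta> ?k) \<gamma> = 3"
      using lead_pair_cartan_int(1)[OF \<gamma>F i] unfolding p_def by simp
    note flip = lead_pair_flip[OF \<gamma>F i disjI2[OF refl] this, folded \<phi>1_def]
    have n: "next_support i (\<phi>1 \<gamma>) = ?k" using flip(2) by (simp only: next_support_def)
    have "p (\<phi>1 \<gamma>) + 1 = 4" using lead_pair_cartan_int(1)[OF flip(1) i] flip(3) n unfolding p_def by simp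
    then show ?thesis using flip(1) n unfolding F3_def by auto
  qed
  have c_pos: "0 < cartan (\<beta> j) \<gamma>" if "\<gamma> \<in> lead_pair i" "j = i \<or> j = next_support i \<gamma>" for \<gamma> j
    using lead_pair_facts[OF that(1) i] inner_root_pos that(2) unfolding cartan_def by auto
  have \<Phi>: "\<gamma> \<in> \<Phi>" if "\<gamma> \<in> lead_pair i" for \<gamma> using lead_pair_facts[OF that i] by auto
  have "inj_on \<phi>3 F3"
  proof (rule inj_onI)
    fix x y assume xy: "x \<in> F3" "y \<in> F3" "\<phi>3 x = \<phi>3 y"
    then have x: "x \<in> lead_pair i" and y: "y \<in> lead_pair i" unfolding F3_def by auto
    have "cartan (\<beta> i) x *\<^sub>R x = cartan (\<beta> i) y *\<^sub>R y" using xy(3) unfolding \<phi>3_def by simp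
    then show "x = y" by (rule positive_multiples_of_roots_eq[OF \<Phi>[OF x] \<Phi>[OF y]
      c_pos[OF x disjI1[OF refl]] c_pos[OF y disjI1[OF refl]]])
  qed
  then have "card F3 \<le> card F1" using \<phi>3 fin13 by (intro card_inj_on_le) auto
  moreover have "inj_on \<phi>1 F1"
  proof (rule inj_onI)
    fix x y assume xy: "x \<in> F1" "y \<in> F1" "\<phi>1 x = \<phi>1 y"
    then have n: "next_support i x = next_support i y" using \<phi>1 by metis
    have x: "x \<in> lead_pair i" and y: "y \<in> lead_pair i" using xy unfolding F1_def by auto
    have "cartan (\<beta> (next_support i x)) x *\<^sub>R x = cartan (\<beta> (next_support i y)) y *\<^sub>R y"
      using xy(3) n unfolding \<phi>1_def by simp
    then show "x = y" by (rule positive_multiples_of_roots_eq[OF \<Phi>[OF x] \<Phi>[OF y]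
      c_pos[OF x disjI2[OF refl]] c_pos[OF y disjI2[OF refl]]])
  qed
  then have "card F1 \<le> card F3" using \<phi>1 fin13 by (intro card_inj_on_le) auto
  moreover have "F1 \<inter> F3 = {}" unfolding F1_def F3_def by auto
  ultimately have "even (card {\<gamma>\<in>lead_pair i. odd (cartan_int (\<beta> i) \<gamma>)})"
    unfolding odd_eq using card_Un_disjoint[OF fin13] by simp
  then show ?thesis using even_sum_diff_card_odd[OF fin, of "cartan_int (\<beta> i)"] by simp
qed

lemma inner_\<beta>_half_sum_coroots_odd:
  assumes i: "i < r"
  shows "(\<beta> i \<bullet> half_sum_coroots pos_roots - 1) / 2 \<in> \<int>"
proof -
  obtain m where "(\<Sum>\<gamma>\<in>lead_plus i. cartan_int (\<beta> i) \<gamma>) = 2 * m"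
    using even_sum_cartan_int_lead_plus_diff_pair[OF i] even_sum_cartan_int_lead_pair[OF i]
    by (metis dvd_add diff_add_cancel evenE)
  then have "(\<Sum>\<gamma>\<in>pos_roots. cartan_int (\<beta> i) \<gamma>) = 4 * m + 2"
    using sum_cartan_int_pos_roots_eq_lead[OF i] sum_cartan_int_lead[OF i]
      sum_cartan_int_lead_other[OF i] by simp
  moreover have "\<beta> i \<bullet> half_sum_coroots pos_roots = of_int (\<Sum>\<gamma>\<in>pos_roots. cartan_int (\<beta> i) \<gamma>) / 2"
    using root_half_pos_roots root_\<beta>[OF i] unfolding root_half_def
    by (auto simp: inner_half_sum_coroots of_int_cartan_int intro!: sum.cong)
  ultimately have "(\<beta> i \<bullet> half_sum_coroots pos_roots - 1) / 2 = of_int m" by simp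
  then show ?thesis by simp
qed

end

theorem lemma1p19:
  fixes \<Phi> :: "'a::euclidean_space set" and \<beta> :: "nat \<Rightarrow> 'a" and r :: nat
  assumes "root_system \<Phi>"
    and "\<And>i. i < r \<Longrightarrow> \<beta> i \<in> \<Phi>"
    and "\<And>i j. i < r \<Longrightarrow> j < r \<Longrightarrow> i \<noteq> j \<Longrightarrow> strongly_orthogonal \<Phi> (\<beta> i) (\<beta> j)"
  shows "\<exists>\<omega>::'a. (\<forall>\<alpha>\<in>\<Phi>. \<alpha> \<bullet> \<omega> \<in> \<int>) \<and> (\<forall>i<r. \<beta> i \<bullet> \<omega> = 1)"
proof -
  interpret strongly_orthogonal_roots \<Phi> \<beta> r
    by unfold_locales (use assms in auto)
  show ?thesis
    by (rule exists_coweight_one_on_orthogonal_roots[where \<omega> = "half_sum_coroots pos_roots"])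
      (use half_sum_coroots_integral[OF root_half_pos_roots] root_\<beta> inner_\<beta>_\<beta>
        inner_\<beta>_half_sum_coroots_odd in auto)
qed

end
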